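(* Let $0<p<1$, let $n\ge 1$, $0\le m\le n$ and $d\ge 1$ be integers, and let $X_1,\ldots,X_n$ be i.i.d. Bernoulli random variables with $P(X_i=1)=p$. Let $L_n$ be the length of the longest run of consecutive $1$'s in $X_1,\ldots,X_n$ (with $L_n=0$ if there is no $1$). Consider the finite set of states $\mathcal{S}=\{(l,j): 0\le l\le m,\ 0\le j\le \min(l,d-1)\}$, where $l$ records the number of $1$'s observed so far and $j$ the length of the current trailing run of $1$'s (the longest suffix of the form $1\cdots1$ of length less than $d$). For $t=1,\ldots,n$ let $\mathbf{N}_t(m)$ be the $\mathcal{S}\times\mathcal{S}$ matrix whose only nonzero entries are \[ \mathbf{N}_t(m)\big((l,j),(l+1,j+1)\big)=\frac{m-l}{n-t+1}\quad\text{if } l+1\le m \text{ and } j+1\le d-1, \] \[ \mathbf{N}_t(m)\big((l,j),(l,0)\big)=\frac{n-m-t+l+1}{n-t+1}, \] (all other entries, in particular transitions that would complete a run of $d$ ones, being $0$). Let $\boldsymbol{\xi}_0$ be the row vector indexed by $\mathcal{S}$ with entry $1$ at $(0,0)$ and $0$ elsewhere, and $\mathbf{1}$ the all-ones row vector indexed by $\mathcal{S}$. Then \[ P\Big(L_n<d \,\Big|\, \sum_{i=1}^n X_i=m\Big)=\boldsymbol{\xi}_0\prod_{t=1}^{n}\mathbf{N}_t(m)\,\mathbf{1}^{\top}. \] In particular this conditional probability does not depend on $p$.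
   Context: The matrices $\mathbf{N}_t(m)$ are the essential (non-absorbing) parts of the transition matrices of a nonhomogeneous Markov chain imbedding the outcome of a uniformly random arrangement of $m$ ones and $n-m$ zeros: at step $t$, given $l$ ones among the first $t-1$ positions, the next symbol is $1$ with probability $(m-l)/(n-t+1)$ and $0$ with probability $(n-m-(t-1-l))/(n-t+1)$; entering a run of $d$ ones corresponds to absorption and is excluded from the essential part. *)

theory Defs
  imports "HOL-Probability.Probability"
begin

text \<open>Sample space: X_1..X_n i.i.d. Bernoulli(p), encoded as a random function
  omega :: nat => bool (X_i = 1 iff omega i), for i in {1..n}.\<close>
definition bern_seq :: "nat \<Rightarrow> real \<Rightarrow> (nat \<Rightarrow> bool) pmf" where
  "bern_seq n p = Pi_pmf {1..n} False (\<lambda>_. bernoulli_pmf p)"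

definition num_ones :: "nat \<Rightarrow> (nat \<Rightarrow> bool) \<Rightarrow> nat" where
  "num_ones n \<omega> = (\<Sum>i=1..n. of_bool (\<omega> i))"

definition longest_run :: "nat \<Rightarrow> (nat \<Rightarrow> bool) \<Rightarrow> nat" where
  "longest_run n \<omega> = Max {k. \<exists>s. 1 \<le> s \<and> s + k \<le> n + 1 \<and> (\<forall>i\<in>{s..<s+k}. \<omega> i)}"

definition states :: "nat \<Rightarrow> nat \<Rightarrow> (nat \<times> nat) set" where
  "states m d = {(l, j). l \<le> m \<and> j \<le> min l (d - 1)}"

definition Nmat :: "nat \<Rightarrow> nat \<Rightarrow> nat \<Rightarrow> nat \<Rightarrow> nat \<times> nat \<Rightarrow> nat \<times> nat \<Rightarrow> real" where
  "Nmat n m d t = (\<lambda>(l, j) (l', j').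
     if l' = l + 1 \<and> j' = j + 1 \<and> l + 1 \<le> m \<and> j + 1 \<le> d - 1
       then (real m - real l) / (real n - real t + 1)
     else if l' = l \<and> j' = 0
       then (real n - real m - real t + real l + 1) / (real n - real t + 1)
     else 0)"

definition matmul :: "'s set \<Rightarrow> ('s \<Rightarrow> 's \<Rightarrow> real) \<Rightarrow> ('s \<Rightarrow> 's \<Rightarrow> real) \<Rightarrow> 's \<Rightarrow> 's \<Rightarrow> real" where
  "matmul S A B = (\<lambda>a c. \<Sum>b\<in>S. A a b * B b c)"

fun matprod :: "'s set \<Rightarrow> (nat \<Rightarrow> 's \<Rightarrow> 's \<Rightarrow> real) \<Rightarrow> nat \<Rightarrow> 's \<Rightarrow> 's \<Rightarrow> real" where
  "matprod S M 0 = (\<lambda>a c. if a = c then 1 else 0)"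
| "matprod S M (Suc k) = matmul S (matprod S M k) (M (Suc k))"

end

theory Submission imports Defs begin

text \<open>Conditioned on \<open>m\<close> ones, every 0/1-word of length \<open>n\<close> with \<open>m\<close> ones has the same
  probability \<open>p ^ m * (1 - p) ^ (n - m)\<close>, so the conditional probability is the number of such
  words without a run of \<open>d\<close> ones divided by \<open>n choose m\<close>. On the matrix side, the entry of
  \<open>\<xi>\<^sub>0 N\<^sub>1 \<dots> N\<^sub>k\<close> at state \<open>(l, j)\<close> is, by induction on \<open>k\<close>, the number of run-free words
  of length \<open>k\<close> with \<open>l\<close> ones and trailing run \<open>j\<close>, times the probability that a fixed such
  prefix begins a uniformly random arrangement of \<open>m\<close> ones and \<open>n - m\<close> zeros. At \<open>k = n\<close> the
  latter is \<open>1 / (n choose m)\<close> for \<open>l = m\<close> and \<open>0\<close> otherwise.\<close>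

definition falling_fact :: "nat \<Rightarrow> nat \<Rightarrow> real" where
  "falling_fact x k = (\<Prod>i<k. real x - real i)"

lemma falling_fact_0 [simp]: "falling_fact x 0 = 1"
  by (simp add: falling_fact_def)

lemma falling_fact_Suc: "falling_fact x (Suc k) = falling_fact x k * (real x - real k)"
  by (simp add: falling_fact_def)

lemma falling_fact_eq_0: "x < k \<Longrightarrow> falling_fact x k = 0"
  unfolding falling_fact_def by (rule prod_zero) (auto intro: bexI[of _ x])

lemma falling_fact_nonzero: "k \<le> x \<Longrightarrow> falling_fact x k \<noteq> 0"
  by (auto simp: falling_fact_def prod_zero_iff)

lemma falling_fact_self: "falling_fact x x = fact x"
  by (simp add: falling_fact_def fact_prod_rev lessThan_atLeast0 of_nat_prod of_nat_diff)

section \<open>Words and their runs\<close>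

definition words :: "nat \<Rightarrow> (nat \<Rightarrow> bool) set" where
  "words k = {w. \<forall>i. w i \<longrightarrow> i \<in> {1..k}}"

lemma words_0: "words 0 = {\<lambda>_. False}"
  by (auto simp: words_def)

lemma words_not_Suc: "w \<in> words k \<Longrightarrow> \<not> w (Suc k)"
  by (auto simp: words_def)

lemma words_Suc: "words (Suc k) = words k \<union> (\<lambda>w. w(Suc k := True)) ` words k"
proof
  show "words (Suc k) \<subseteq> words k \<union> (\<lambda>w. w(Suc k := True)) ` words k"
  proof
    fix w assume w: "w \<in> words (Suc k)"
    show "w \<in> words k \<union> (\<lambda>w. w(Suc k := True)) ` words k"
    proof (cases "w (Suc k)")
      case True
      then have "w = (w(Suc k := False))(Suc k := True)" by (simp add: fun_upd_idem)
      moreover have "w(Suc k := False) \<in> words k" using w by (auto simp: words_def le_Suc_eq)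
      ultimately show ?thesis by blast
    qed (use w in \<open>auto simp: words_def le_Suc_eq\<close>)
  qed
qed (auto simp: words_def split: if_splits)

lemma finite_words: "finite (words k)"
  by (induction k) (auto simp: words_0 words_Suc)

lemma inj_on_upd_Suc_words: "inj_on (\<lambda>w. w(Suc k := True)) (words k)"
proof (rule inj_onI)
  fix v w assume "v \<in> words k" "w \<in> words k" and eq: "v(Suc k := True) = w(Suc k := True)"
  show "v = w"
  proof
    fix i show "v i = w i"
      using fun_cong[OF eq, of i] words_not_Suc[OF \<open>v \<in> words k\<close>] words_not_Suc[OF \<open>w \<in> words k\<close>]
      by (cases "i = Suc k") auto
  qed
qed

lemma sum_words_Suc:
  "(\<Sum>w\<in>words (Suc k). g w) = (\<Sum>w\<in>words k. g w) + (\<Sum>w\<in>words k. g (w(Suc k := True)))"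
proof -
  have "words k \<inter> (\<lambda>w. w(Suc k := True)) ` words k = {}"
    by (auto dest: words_not_Suc)
  then show ?thesis
    unfolding words_Suc
    by (simp add: sum.union_disjoint finite_words sum.reindex[OF inj_on_upd_Suc_words])
qed

lemma num_ones_0: "num_ones 0 w = 0"
  by (simp add: num_ones_def)

lemma num_ones_Suc: "num_ones (Suc k) w = num_ones k w + of_bool (w (Suc k))"
  by (simp add: num_ones_def sum.cl_ivl_Suc)

lemma num_ones_le: "num_ones k w \<le> k"
  by (induction k) (auto simp: num_ones_0 num_ones_Suc)

lemma num_ones_upd_Suc: "num_ones k (w(Suc k := b)) = num_ones k w"
  unfolding num_ones_def by (rule sum.cong) auto

fun trailing_run :: "nat \<Rightarrow> (nat \<Rightarrow> bool) \<Rightarrow> nat" where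
  "trailing_run 0 w = 0"
| "trailing_run (Suc k) w = (if w (Suc k) then Suc (trailing_run k w) else 0)"

fun run_free :: "nat \<Rightarrow> nat \<Rightarrow> (nat \<Rightarrow> bool) \<Rightarrow> bool" where
  "run_free d 0 w = True"
| "run_free d (Suc k) w = (run_free d k w \<and> (w (Suc k) \<longrightarrow> Suc (trailing_run k w) < d))"

lemma trailing_run_cong: "(\<And>i. i \<le> k \<Longrightarrow> v i = w i) \<Longrightarrow> trailing_run k v = trailing_run k w"
  by (induction k) auto

lemma run_free_cong: "(\<And>i. i \<le> k \<Longrightarrow> v i = w i) \<Longrightarrow> run_free d k v = run_free d k w"
proof (induction k)
  case (Suc k)
  then have "trailing_run k v = trailing_run k w" by (intro trailing_run_cong) auto
  with Suc show ?case by auto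
qed simp

lemma trailing_run_upd_Suc: "trailing_run k (w(Suc k := b)) = trailing_run k w"
  by (rule trailing_run_cong) auto

lemma run_free_upd_Suc: "run_free d k (w(Suc k := b)) = run_free d k w"
  by (rule run_free_cong) auto

lemma trailing_run_le_num_ones: "trailing_run k w \<le> num_ones k w"
  by (induction k) (auto simp: num_ones_0 num_ones_Suc)

lemma trailing_run_less_if_run_free: "0 < d \<Longrightarrow> run_free d k w \<Longrightarrow> trailing_run k w < d"
  by (induction k) auto

lemma le_trailing_run_iff:
  "r \<le> trailing_run k w \<longleftrightarrow> r \<le> k \<and> (\<forall>i. k - r < i \<and> i \<le> k \<longrightarrow> w i)"
proof (induction k arbitrary: r)
  case (Suc k)
  show ?case
  proof (cases r)
    case r: (Suc r')
    show ?thesis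
    proof (cases "w (Suc k)")
      case True
      then have "r \<le> trailing_run (Suc k) w \<longleftrightarrow> r' \<le> trailing_run k w" using r by simp
      with True r show ?thesis by (auto simp: Suc.IH le_Suc_eq)
    qed (use r in \<open>auto intro!: exI[of _ "Suc k"]\<close>)
  qed auto
qed simp

definition has_run :: "nat \<Rightarrow> nat \<Rightarrow> (nat \<Rightarrow> bool) \<Rightarrow> bool" where
  "has_run d k w \<longleftrightarrow> (\<exists>s. 1 \<le> s \<and> s + d \<le> k + 1 \<and> (\<forall>i\<in>{s..<s+d}. w i))"

lemma has_run_Suc:
  "has_run d (Suc k) w \<longleftrightarrow> has_run d k w \<or> (d \<le> Suc k \<and> (\<forall>i. Suc k - d < i \<and> i \<le> Suc k \<longrightarrow> w i))"
proof
  assume "has_run d (Suc k) w"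
  then obtain s where s: "1 \<le> s" "s + d \<le> Suc k + 1" "\<forall>i\<in>{s..<s+d}. w i"
    unfolding has_run_def by auto
  show "has_run d k w \<or> (d \<le> Suc k \<and> (\<forall>i. Suc k - d < i \<and> i \<le> Suc k \<longrightarrow> w i))"
  proof (cases "s + d \<le> k + 1")
    case False
    then have "s + d = Suc k + 1" using s by simp
    then show ?thesis using s by auto
  qed (use s in \<open>auto simp: has_run_def\<close>)
next
  assume "has_run d k w \<or> (d \<le> Suc k \<and> (\<forall>i. Suc k - d < i \<and> i \<le> Suc k \<longrightarrow> w i))"
  then show "has_run d (Suc k) w"
  proof
    assume "has_run d k w" then show ?thesis unfolding has_run_def by force
  next
    assume "d \<le> Suc k \<and> (\<forall>i. Suc k - d < i \<and> i \<le> Suc k \<longrightarrow> w i)"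
    then show ?thesis unfolding has_run_def by (intro exI[of _ "Suc k + 1 - d"]) auto
  qed
qed

lemma run_free_iff_not_has_run: "0 < d \<Longrightarrow> run_free d k w \<longleftrightarrow> \<not> has_run d k w"
proof (induction k)
  case 0 then show ?case by (auto simp: has_run_def)
next
  case (Suc k)
  have "(w (Suc k) \<and> d - 1 \<le> trailing_run k w) \<longleftrightarrow>
        (d \<le> Suc k \<and> (\<forall>i. Suc k - d < i \<and> i \<le> Suc k \<longrightarrow> w i))"
    unfolding le_trailing_run_iff using Suc.prems by (auto simp: le_Suc_eq)
  with Suc show ?case by (auto simp: has_run_Suc)
qed

lemma longest_run_less_iff_not_has_run: "longest_run n w < d \<longleftrightarrow> \<not> has_run d n w"
proof -
  let ?K = "{k. \<exists>s. 1 \<le> s \<and> s + k \<le> n + 1 \<and> (\<forall>i\<in>{s..<s+k}. w i)}"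
  have "finite ?K" by (rule finite_subset[of _ "{..n}"]) auto
  moreover have "0 \<in> ?K" by (intro CollectI exI[of _ 1]) simp
  ultimately have "longest_run n w < d \<longleftrightarrow> (\<forall>k\<in>?K. k < d)"
    unfolding longest_run_def using Max_less_iff by blast
  also have "\<dots> \<longleftrightarrow> d \<notin> ?K"
  proof
    assume "d \<notin> ?K"
    show "\<forall>k\<in>?K. k < d"
    proof
      fix k assume "k \<in> ?K"
      then obtain s where s: "1 \<le> s" "s + k \<le> n + 1" "\<forall>i\<in>{s..<s+k}. w i" by blast
      show "k < d"
      proof (rule ccontr)
        assume "\<not> k < d"
        with s have "d \<in> ?K" by (intro CollectI exI[of _ s]) auto
        with \<open>d \<notin> ?K\<close> show False by blast
      qed
    qed
  qed blast
  finally show ?thesis by (simp add: has_run_def)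
qed

section \<open>Counting run-free words\<close>

definition run_free_count :: "nat \<Rightarrow> nat \<Rightarrow> nat \<Rightarrow> real" where
  "run_free_count d k l = (\<Sum>w\<in>words k. of_bool (num_ones k w = l \<and> run_free d k w))"

definition state_count :: "nat \<Rightarrow> nat \<Rightarrow> nat \<Rightarrow> nat \<Rightarrow> real" where
  "state_count d k l j =
     (\<Sum>w\<in>words k. of_bool (num_ones k w = l \<and> run_free d k w \<and> trailing_run k w = j))"

lemma sum_words_num_ones: "(\<Sum>w\<in>words k. of_bool (num_ones k w = l)) = real (k choose l)"
proof (induction k arbitrary: l)
  case 0 then show ?case by (simp add: words_0 num_ones_0)
next
  case (Suc k)
  have "(\<Sum>w\<in>words (Suc k). of_bool (num_ones (Suc k) w = l)) =
     (\<Sum>w\<in>words k. of_bool (num_ones k w = l)) + (\<Sum>w\<in>words k. of_bool (num_ones k w + 1 = l))"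
    unfolding sum_words_Suc
    by (auto intro!: sum.cong simp: num_ones_Suc words_not_Suc num_ones_upd_Suc)
  also have "\<dots> = real (Suc k choose l)"
    using Suc.IH by (cases l) simp_all
  finally show ?case .
qed

lemma state_count_0: "state_count d 0 l j = of_bool (l = 0 \<and> j = 0)"
  by (simp add: state_count_def words_0 num_ones_0)

lemma state_count_eq_0: "k < l \<Longrightarrow> state_count d k l j = 0"
  unfolding state_count_def using num_ones_le[of k] by (intro sum.neutral) (metis leD of_bool_eq(1))

lemma state_count_Suc_0: "state_count d (Suc k) l 0 = run_free_count d k l"
  unfolding state_count_def run_free_count_def sum_words_Suc
  by (auto intro!: sum.cong simp: num_ones_Suc words_not_Suc trailing_run_upd_Suc
      run_free_upd_Suc num_ones_upd_Suc)

lemma state_count_Suc_Suc: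
  "state_count d (Suc k) l (Suc j) = (if Suc j < d \<and> 1 \<le> l then state_count d k (l - 1) j else 0)"
proof -
  have "state_count d (Suc k) l (Suc j) = (\<Sum>w\<in>words k.
      of_bool (num_ones k w + 1 = l \<and> run_free d k w \<and> Suc (trailing_run k w) < d \<and> trailing_run k w = j))"
    unfolding state_count_def sum_words_Suc
    by (auto intro!: sum.cong simp: num_ones_Suc words_not_Suc trailing_run_upd_Suc
        run_free_upd_Suc num_ones_upd_Suc)
  also have "\<dots> = (if Suc j < d \<and> 1 \<le> l then state_count d k (l - 1) j else 0)"
    unfolding state_count_def by (auto intro!: sum.cong sum.neutral)
  finally show ?thesis .
qed

lemma run_free_count_eq_sum_state_count:
  assumes "0 < d"
  shows "run_free_count d k l = (\<Sum>j\<le>min l (d - 1). state_count d k l j)"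
proof -
  have "(\<Sum>j\<le>min l (d - 1). state_count d k l j) = (\<Sum>w\<in>words k. \<Sum>j\<le>min l (d - 1).
      if j = trailing_run k w then of_bool (num_ones k w = l \<and> run_free d k w) else 0)"
    unfolding state_count_def by (subst sum.swap) (auto intro!: sum.cong)
  also have "\<dots> = run_free_count d k l"
    unfolding run_free_count_def
  proof (rule sum.cong)
    fix w
    have "num_ones k w = l \<and> run_free d k w \<Longrightarrow> trailing_run k w \<le> min l (d - 1)"
      using trailing_run_less_if_run_free[OF assms, of k w] trailing_run_le_num_ones[of k w] by auto
    then show "(\<Sum>j\<le>min l (d - 1). if j = trailing_run k w then of_bool (num_ones k w = l \<and> run_free d k w) else 0)
       = of_bool (num_ones k w = l \<and> run_free d k w)"
      by (cases "num_ones k w = l \<and> run_free d k w") (simp_all add: sum.delta)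
  qed simp
  finally show ?thesis by simp
qed

section \<open>The matrix product\<close>

text \<open>\<open>prefix_prob n m k l\<close> is the probability that a fixed 0/1-word of length \<open>k\<close> with \<open>l\<close>
  ones is the beginning of a uniformly random arrangement of \<open>m\<close> ones and \<open>n - m\<close> zeros.\<close>

definition prefix_prob :: "nat \<Rightarrow> nat \<Rightarrow> nat \<Rightarrow> nat \<Rightarrow> real" where
  "prefix_prob n m k l = falling_fact m l * falling_fact (n - m) (k - l) / falling_fact n k"

lemma prefix_prob_0: "prefix_prob n m 0 0 = 1"
  by (simp add: prefix_prob_def)

lemma prefix_prob_Suc_zero:
  assumes "l \<le> k" "k < n" "m \<le> n"
  shows "prefix_prob n m (Suc k) l = prefix_prob n m k l *
    ((real n - real m - real (Suc k) + real l + 1) / (real n - real (Suc k) + 1))"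
proof -
  have "Suc k - l = Suc (k - l)" using assms by simp
  moreover have "falling_fact n k \<noteq> 0" "real n - real k \<noteq> 0"
    using assms by (simp_all add: falling_fact_nonzero)
  ultimately show ?thesis
    using assms by (simp add: prefix_prob_def falling_fact_Suc of_nat_diff field_simps)
qed

lemma prefix_prob_Suc_one:
  assumes "1 \<le> l" "k < n"
  shows "prefix_prob n m (Suc k) l = prefix_prob n m k (l - 1) *
    ((real m - real (l - 1)) / (real n - real (Suc k) + 1))"
proof -
  obtain l' where l: "l = Suc l'" using assms by (cases l) auto
  have "falling_fact n k \<noteq> 0" "real n - real k \<noteq> 0"
    using assms by (simp_all add: falling_fact_nonzero)
  then show ?thesis
    using assms by (simp add: prefix_prob_def falling_fact_Suc l field_simps)
qed

lemma prefix_prob_complete: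
  assumes "l \<le> m" "m \<le> n"
  shows "prefix_prob n m n l = (if l = m then 1 / real (n choose m) else 0)"
proof (cases "l = m")
  case True
  then show ?thesis
    using assms by (simp add: prefix_prob_def falling_fact_self binomial_fact)
next
  case False
  then have "falling_fact (n - m) (n - l) = 0"
    using assms by (intro falling_fact_eq_0) simp
  with False show ?thesis by (simp add: prefix_prob_def)
qed

lemma states_Sigma: "states m d = Sigma {..m} (\<lambda>l. {..min l (d - 1)})"
  by (auto simp: states_def)

lemma finite_states: "finite (states m d)"
  unfolding states_Sigma by auto

lemma sum_states: "(\<Sum>c\<in>states m d. f c) = (\<Sum>l\<le>m. \<Sum>j\<le>min l (d - 1). f (l, j))"
  unfolding states_Sigma by (simp add: sum.Sigma)

lemma sum_mult_Nmat_col_0: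
  assumes "l' \<le> m"
  shows "(\<Sum>b\<in>states m d. v b * Nmat n m d t b (l', 0)) =
    (\<Sum>j\<le>min l' (d - 1). v (l', j)) * ((real n - real m - real t + real l' + 1) / (real n - real t + 1))"
proof -
  let ?a = "(real n - real m - real t + real l' + 1) / (real n - real t + 1)"
  have "(\<Sum>b\<in>states m d. v b * Nmat n m d t b (l', 0)) =
      (\<Sum>l\<le>m. \<Sum>j\<le>min l (d - 1). v (l, j) * (if l = l' then ?a else 0))"
    unfolding sum_states by (auto simp: Nmat_def intro!: sum.cong)
  also have "\<dots> = (\<Sum>l\<le>m. if l = l' then \<Sum>j\<le>min l (d - 1). v (l, j) * ?a else 0)"
    by (rule sum.cong) auto
  also have "\<dots> = (\<Sum>j\<le>min l' (d - 1). v (l', j)) * ?a"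
    using assms by (simp add: sum_distrib_right sum_divide_distrib)
  finally show ?thesis .
qed

lemma sum_mult_Nmat_col_Suc:
  assumes "(l', Suc j) \<in> states m d"
  shows "(\<Sum>b\<in>states m d. v b * Nmat n m d t b (l', Suc j)) =
    v (l' - 1, j) * ((real m - real (l' - 1)) / (real n - real t + 1))"
proof -
  let ?b = "(real m - real (l' - 1)) / (real n - real t + 1)"
  have "Nmat n m d t b (l', Suc j) = (if b = (l' - 1, j) then ?b else 0)" for b
    using assms by (cases b) (auto simp: states_def Nmat_def)
  then have "(\<Sum>b\<in>states m d. v b * Nmat n m d t b (l', Suc j)) =
      (\<Sum>b\<in>states m d. if b = (l' - 1, j) then v b * ?b else 0)"
    by (intro sum.cong) auto
  moreover have "(l' - 1, j) \<in> states m d"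
    using assms by (auto simp: states_def)
  ultimately show ?thesis by (simp add: sum.delta[OF finite_states])
qed

lemma matprod_Nmat_origin_row:
  assumes "m \<le> n" "0 < d" "k \<le> n" "(l, j) \<in> states m d"
  shows "matprod (states m d) (Nmat n m d) k (0, 0) (l, j) = state_count d k l j * prefix_prob n m k l"
  using assms(3,4)
proof (induction k arbitrary: l j)
  case 0
  then show ?case by (auto simp: state_count_0 prefix_prob_0)
next
  case (Suc k)
  let ?v = "\<lambda>(l, j). state_count d k l j * prefix_prob n m k l"
  have "matprod (states m d) (Nmat n m d) (Suc k) (0, 0) (l, j) =
      (\<Sum>b\<in>states m d. ?v b * Nmat n m d (Suc k) b (l, j))"
    using Suc by (auto simp: matmul_def intro!: sum.cong)
  also have "\<dots> = state_count d (Suc k) l j * prefix_prob n m (Suc k) l"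
  proof (cases j)
    case 0
    have "l \<le> m" using Suc.prems by (simp add: states_def)
    have "run_free_count d k l * prefix_prob n m k l *
        ((real n - real m - real (Suc k) + real l + 1) / (real n - real (Suc k) + 1)) =
        run_free_count d k l * prefix_prob n m (Suc k) l"
    proof (cases "l \<le> k")
      case False
      then show ?thesis by (simp add: run_free_count_eq_sum_state_count[OF assms(2)] state_count_eq_0)
    qed (use Suc.prems assms in \<open>simp add: prefix_prob_Suc_zero\<close>)
    with \<open>l \<le> m\<close> show ?thesis
      by (simp add: 0 sum_mult_Nmat_col_0 state_count_Suc_0 run_free_count_eq_sum_state_count[OF assms(2)]
          sum_distrib_right)
  next
    case j: (Suc j')
    with Suc.prems have "(l, Suc j') \<in> states m d" "1 \<le> l" "Suc j' < d" "k < n"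
      by (auto simp: states_def)
    then show ?thesis
      by (simp add: j sum_mult_Nmat_col_Suc state_count_Suc_Suc prefix_prob_Suc_one)
  qed
  finally show ?case .
qed

lemma sum_matprod_Nmat_origin_row:
  assumes "m \<le> n" "0 < d"
  shows "(\<Sum>c\<in>states m d. matprod (states m d) (Nmat n m d) n (0, 0) c) =
    run_free_count d n m / real (n choose m)"
proof -
  have "(\<Sum>c\<in>states m d. matprod (states m d) (Nmat n m d) n (0, 0) c) =
      (\<Sum>l\<le>m. \<Sum>j\<le>min l (d - 1). state_count d n l j * prefix_prob n m n l)"
  proof -
    have "l \<le> m \<Longrightarrow> j \<le> min l (d - 1) \<Longrightarrow> (l, j) \<in> states m d" for l j
      by (simp add: states_def)
    then show ?thesis using assms by (auto simp: sum_states matprod_Nmat_origin_row intro!: sum.cong)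
  qed
  also have "\<dots> = (\<Sum>l\<le>m. if l = m then run_free_count d n m / real (n choose m) else 0)"
    using assms
    by (intro sum.cong) (simp_all add: prefix_prob_complete run_free_count_eq_sum_state_count sum_divide_distrib)
  finally show ?thesis by simp
qed

section \<open>The conditional probability\<close>

lemma prod_pmf_bernoulli:
  assumes "0 \<le> p" "p \<le> 1"
  shows "(\<Prod>i=1..k. pmf (bernoulli_pmf p) (w i)) = p ^ num_ones k w * (1 - p) ^ (k - num_ones k w)"
proof (induction k)
  case (Suc k)
  have "Suc k - num_ones k w = Suc (k - num_ones k w)"
    using num_ones_le[of k w] by simp
  with Suc assms show ?case
    by (cases "w (Suc k)") (simp_all add: prod.cl_ivl_Suc num_ones_Suc)
qed (simp add: num_ones_0)

lemma prob_bern_seq: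
  assumes "0 \<le> p" "p \<le> 1"
  shows "measure_pmf.prob (bern_seq n p) E =
    (\<Sum>w\<in>words n. of_bool (w \<in> E) * (p ^ num_ones n w * (1 - p) ^ (n - num_ones n w)))"
proof -
  have "set_pmf (bern_seq n p) \<subseteq> words n"
    unfolding bern_seq_def using set_Pi_pmf_subset[of "{1..n}" False "\<lambda>_. bernoulli_pmf p"]
    by (auto simp: words_def)
  then have "measure_pmf.prob (bern_seq n p) E = measure_pmf.prob (bern_seq n p) (words n \<inter> E)"
    by (intro measure_eq_AE) (auto simp: AE_measure_pmf_iff)
  also have "\<dots> = (\<Sum>w\<in>words n. if w \<in> E then pmf (bern_seq n p) w else 0)"
    by (simp add: measure_measure_pmf_finite finite_words sum.inter_restrict)
  also have "\<dots> = (\<Sum>w\<in>words n. of_bool (w \<in> E) * (p ^ num_ones n w * (1 - p) ^ (n - num_ones n w)))"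
  proof (rule sum.cong)
    fix w assume "w \<in> words n"
    then have "pmf (bern_seq n p) w = (\<Prod>i=1..n. pmf (bernoulli_pmf p) (w i))"
      unfolding bern_seq_def by (subst pmf_Pi) (auto simp: words_def)
    then show "(if w \<in> E then pmf (bern_seq n p) w else 0) =
        of_bool (w \<in> E) * (p ^ num_ones n w * (1 - p) ^ (n - num_ones n w))"
      using prod_pmf_bernoulli[OF assms] by simp
  qed simp
  finally show ?thesis .
qed

lemma prob_num_ones_eq:
  assumes "0 \<le> p" "p \<le> 1"
  shows "measure_pmf.prob (bern_seq n p) {\<omega>. num_ones n \<omega> = m} =
    real (n choose m) * (p ^ m * (1 - p) ^ (n - m))"
  unfolding prob_bern_seq[OF assms] sum_words_num_ones[symmetric] sum_distrib_right
  by (rule sum.cong) auto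

lemma prob_longest_run_less_num_ones_eq:
  assumes "0 \<le> p" "p \<le> 1" "0 < d"
  shows "measure_pmf.prob (bern_seq n p) {\<omega>. longest_run n \<omega> < d \<and> num_ones n \<omega> = m} =
    run_free_count d n m * (p ^ m * (1 - p) ^ (n - m))"
  unfolding prob_bern_seq[OF assms(1,2)] run_free_count_def sum_distrib_right
  by (rule sum.cong)
     (auto simp: longest_run_less_iff_not_has_run run_free_iff_not_has_run[OF assms(3)])

theorem mainTheorem1:
  fixes p :: real and n m d :: nat
  assumes "0 < p" "p < 1" "1 \<le> n" "m \<le> n" "1 \<le> d"
  shows "measure_pmf.prob (bern_seq n p) {\<omega>. longest_run n \<omega> < d \<and> num_ones n \<omega> = m}
           / measure_pmf.prob (bern_seq n p) {\<omega>. num_ones n \<omega> = m}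
         = (\<Sum>a\<in>states m d. \<Sum>c\<in>states m d.
              (if a = (0, 0) then 1 else 0) * matprod (states m d) (Nmat n m d) n a c * 1)"
proof -
  have p: "0 \<le> p" "p \<le> 1" and "0 < d" using assms by simp_all
  have "p ^ m * (1 - p) ^ (n - m) \<noteq> 0" and "real (n choose m) \<noteq> 0"
    using assms by simp_all
  then have "measure_pmf.prob (bern_seq n p) {\<omega>. longest_run n \<omega> < d \<and> num_ones n \<omega> = m}
           / measure_pmf.prob (bern_seq n p) {\<omega>. num_ones n \<omega> = m}
      = run_free_count d n m / real (n choose m)"
    by (simp add: prob_num_ones_eq[OF p] prob_longest_run_less_num_ones_eq[OF p \<open>0 < d\<close>])
  also have "\<dots> = (\<Sum>c\<in>states m d. matprod (states m d) (Nmat n m d) n (0, 0) c)"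
    using sum_matprod_Nmat_origin_row[OF \<open>m \<le> n\<close> \<open>0 < d\<close>] by simp
  also have "\<dots> = (\<Sum>a\<in>states m d.
      if a = (0, 0) then \<Sum>c\<in>states m d. matprod (states m d) (Nmat n m d) n a c else 0)"
    using finite_states by (simp add: sum.delta' states_def)
  also have "\<dots> = (\<Sum>a\<in>states m d. \<Sum>c\<in>states m d.
              (if a = (0, 0) then 1 else 0) * matprod (states m d) (Nmat n m d) n a c * 1)"
    by (rule sum.cong) auto
  finally show ?thesis .
qed

end
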